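(* Let $G$ be a graph and $v$ a vertex of $G$. Then $$\phi(G)\le \phi(G-v)+\phi(G-N[v])+\sum_{u\in N(v)}\phi\big(G-(N[v]\cup N[u])\big).$$ Moreover, if there exists a vertex $w\in N(v)$ with $N[w]\subseteq N[v]$, then $$\phi(G)\le \phi(G-v)+\sum_{u\in N(v)}\phi\big(G-(N[v]\cup N[u])\big).$$
   Context: Graphs are finite and simple. $N(v)$ is the neighborhood of $v$, $N[v]=N(v)\cup\{v\}$, and $G-S$ is the subgraph induced by $V(G)\setminus S$. A subset $F$ of vertices is a dissociation set if $G[F]$ has maximum degree at most $1$; a maximal dissociation set is one not properly contained in another dissociation set; $\phi(G)$ is the number of maximal dissociation sets of $G$, with $\phi=1$ for the graph with no vertices. *)

theory Defs
  imports Main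
begin

text \<open>Induced subgraphs
  G[S] (S a subset of V) are represented by the pair (E, S): the edge relation
  restricted to S.\<close>

definition simple_graph :: "'a set \<Rightarrow> ('a \<Rightarrow> 'a \<Rightarrow> bool) \<Rightarrow> bool" where
  "simple_graph V E \<longleftrightarrow> finite V \<and> (\<forall>x y. E x y \<longrightarrow> E y x)
     \<and> (\<forall>x. \<not> E x x) \<and> (\<forall>x y. E x y \<longrightarrow> x \<in> V \<and> y \<in> V)"

definition open_nbhd :: "'a set \<Rightarrow> ('a \<Rightarrow> 'a \<Rightarrow> bool) \<Rightarrow> 'a \<Rightarrow> 'a set" where
  "open_nbhd V E v = {u \<in> V. E v u}"

definition closed_nbhd :: "'a set \<Rightarrow> ('a \<Rightarrow> 'a \<Rightarrow> bool) \<Rightarrow> 'a \<Rightarrow> 'a set" where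
  "closed_nbhd V E v = insert v (open_nbhd V E v)"

definition dissociation_set :: "('a \<Rightarrow> 'a \<Rightarrow> bool) \<Rightarrow> 'a set \<Rightarrow> 'a set \<Rightarrow> bool" where
  "dissociation_set E S F \<longleftrightarrow> F \<subseteq> S \<and> (\<forall>x\<in>F. card {y \<in> F. E x y} \<le> 1)"

definition maximal_dissociation_set :: "('a \<Rightarrow> 'a \<Rightarrow> bool) \<Rightarrow> 'a set \<Rightarrow> 'a set \<Rightarrow> bool" where
  "maximal_dissociation_set E S F \<longleftrightarrow> dissociation_set E S F
     \<and> \<not> (\<exists>F'. F \<subset> F' \<and> dissociation_set E S F')"

text \<open>phi of the induced subgraph G[S]: number of maximal dissociation sets
  (equals 1 when S is empty, the only one being the empty set).\<close>
definition phi :: "('a \<Rightarrow> 'a \<Rightarrow> bool) \<Rightarrow> 'a set \<Rightarrow> nat" where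
  "phi E S = card {F. maximal_dissociation_set E S F}"

end

theory Submission
  imports Defs
begin

text \<open>Sort the maximal dissociation sets F of G by how they meet v.  If v \<notin> F, then F is
  maximal in G - v.  Otherwise v lies in a component of G[F] that is either {v} or an edge
  {v, u} with u \<in> N(v); removing that component together with its closed neighbourhood
  leaves a maximal dissociation set of G - N[v], respectively of G - (N[v] \<union> N[u]), from
  which F is recovered.  If some w \<in> N(v) has N[w] \<subseteq> N[v], the case of v isolated in G[F]
  cannot occur, since w could then be added to F.\<close>

definition maximal_dissociation_sets :: "('a \<Rightarrow> 'a \<Rightarrow> bool) \<Rightarrow> 'a set \<Rightarrow> 'a set set" where
  "maximal_dissociation_sets E S = {F. maximal_dissociation_set E S F}"

lemma phi_eq_card_maximal_dissociation_sets: "phi E S = card (maximal_dissociation_sets E S)"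
  by (simp add: phi_def maximal_dissociation_sets_def)

lemma finite_maximal_dissociation_sets:
  "finite S \<Longrightarrow> finite (maximal_dissociation_sets E S)"
  by (rule finite_subset[of _ "Pow S"])
     (auto simp: maximal_dissociation_sets_def maximal_dissociation_set_def dissociation_set_def)

lemma dissociation_set_unique_neighbour:
  assumes "dissociation_set E S F" "finite S" "x \<in> F" "y \<in> F" "z \<in> F" "E x y" "E x z"
  shows "y = z"
proof -
  have "finite F" "card {y \<in> F. E x y} \<le> Suc 0"
    using assms(1-3) finite_subset unfolding dissociation_set_def by auto
  then show ?thesis
    using assms(4-7) card_le_Suc0_iff_eq[of "{y \<in> F. E x y}"] by auto
qed

lemma maximal_dissociation_set_subset:
  assumes "maximal_dissociation_set E S F" "F \<subseteq> T" "T \<subseteq> S"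
  shows "maximal_dissociation_set E T F"
  using assms unfolding maximal_dissociation_set_def dissociation_set_def by (meson subset_trans)

lemma dissociation_set_subset:
  assumes "dissociation_set E S F" "finite F" "H \<subseteq> F" "H \<subseteq> T"
  shows "dissociation_set E T H"
  unfolding dissociation_set_def
proof (intro conjI ballI)
  fix a assume "a \<in> H"
  have "card {y \<in> H. E a y} \<le> card {y \<in> F. E a y}"
    using assms(2,3) by (intro card_mono) auto
  also have "\<dots> \<le> 1" using assms(1,3) \<open>a \<in> H\<close> unfolding dissociation_set_def by blast
  finally show "card {y \<in> H. E a y} \<le> 1" .
qed (fact assms(4))

lemma dissociation_set_Un:
  assumes "dissociation_set E S A" "dissociation_set E S B"
    and "\<forall>x\<in>A. \<forall>y\<in>B. \<not> E x y \<and> \<not> E y x"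
  shows "dissociation_set E S (A \<union> B)"
  unfolding dissociation_set_def
proof (intro conjI ballI)
  fix a assume "a \<in> A \<union> B"
  then have "{y \<in> A \<union> B. E a y} = {y \<in> A. E a y} \<and> a \<in> A
      \<or> {y \<in> A \<union> B. E a y} = {y \<in> B. E a y} \<and> a \<in> B"
    using assms(3) by blast
  then show "card {y \<in> A \<union> B. E a y} \<le> 1"
    using assms(1,2) unfolding dissociation_set_def by auto
qed (use assms(1,2) in \<open>auto simp: dissociation_set_def\<close>)

lemma maximal_dissociation_set_remove_components:
  assumes g: "simple_graph V E" and m: "maximal_dissociation_set E V F"
    and "X \<subseteq> F" and separated: "\<forall>x\<in>X. \<forall>y\<in>F - X. \<not> E x y"
  shows "maximal_dissociation_set E (V - (\<Union>x\<in>X. closed_nbhd V E x)) (F - X)"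
proof -
  let ?S = "V - (\<Union>x\<in>X. closed_nbhd V E x)"
  have sym: "\<And>x y. E x y \<Longrightarrow> E y x" using g unfolding simple_graph_def by blast
  have d: "dissociation_set E V F" and maximal: "\<And>F'. F \<subset> F' \<Longrightarrow> \<not> dissociation_set E V F'"
    using m unfolding maximal_dissociation_set_def by auto
  have "finite F" using d g finite_subset unfolding dissociation_set_def simple_graph_def by blast
  have "F - X \<subseteq> ?S"
    using d separated unfolding dissociation_set_def closed_nbhd_def open_nbhd_def by blast
  then have "dissociation_set E ?S (F - X)"
    by (rule dissociation_set_subset[OF d \<open>finite F\<close> Diff_subset])
  moreover have "\<not> dissociation_set E ?S F'" if "F - X \<subset> F'" for F'
  proof
    assume d': "dissociation_set E ?S F'"
    have "F' \<inter> X = {}" and far: "\<forall>x\<in>F'. \<forall>y\<in>X. \<not> E x y \<and> \<not> E y x"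
      using d' sym unfolding dissociation_set_def closed_nbhd_def open_nbhd_def by blast+
    have "dissociation_set E V F'" using d' unfolding dissociation_set_def by blast
    moreover have "dissociation_set E V X"
      using dissociation_set_subset[OF d \<open>finite F\<close> \<open>X \<subseteq> F\<close>] d \<open>X \<subseteq> F\<close>
      unfolding dissociation_set_def by blast
    ultimately have "dissociation_set E V (F' \<union> X)" using far by (rule dissociation_set_Un)
    moreover have "F \<subset> F' \<union> X" using that \<open>F' \<inter> X = {}\<close> by blast
    ultimately show False using maximal by blast
  qed
  ultimately show ?thesis unfolding maximal_dissociation_set_def by blast
qed

lemma maximal_dissociation_set_cases:
  assumes g: "simple_graph V E" and m: "maximal_dissociation_set E V F"
  obtains "F \<in> maximal_dissociation_sets E (V - {v})"
  | "v \<in> F" "\<forall>u\<in>F. \<not> E v u"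
      "F \<in> insert v ` maximal_dissociation_sets E (V - closed_nbhd V E v)"
  | u where "u \<in> open_nbhd V E v"
      "F \<in> (\<lambda>H. insert v (insert u H)) `
             maximal_dissociation_sets E (V - (closed_nbhd V E v \<union> closed_nbhd V E u))"
proof -
  have fin: "finite V" and sym: "\<And>x y. E x y \<Longrightarrow> E y x" and edge_V: "\<And>x y. E x y \<Longrightarrow> y \<in> V"
    using g unfolding simple_graph_def by auto
  have d: "dissociation_set E V F" using m unfolding maximal_dissociation_set_def by blast
  consider "v \<notin> F" | "v \<in> F" "\<forall>u\<in>F. \<not> E v u" | u where "v \<in> F" "u \<in> F" "E v u" by blast
  then show thesis
  proof cases
    case 1
    then have "F \<subseteq> V - {v}" using d unfolding dissociation_set_def by blast
    then have "maximal_dissociation_set E (V - {v}) F"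
      using maximal_dissociation_set_subset[OF m] by blast
    then show thesis using that(1) unfolding maximal_dissociation_sets_def by blast
  next
    case 2
    then have "maximal_dissociation_set E (V - closed_nbhd V E v) (F - {v})"
      using maximal_dissociation_set_remove_components[OF g m, of "{v}"] by auto
    moreover have "F = insert v (F - {v})" using 2 by blast
    ultimately show thesis using that(2) 2 unfolding maximal_dissociation_sets_def by blast
  next
    case (3 u)
    have "\<forall>x\<in>{v, u}. \<forall>y\<in>F - {v, u}. \<not> E x y"
      using 3 sym dissociation_set_unique_neighbour[OF d fin] by blast
    then have "maximal_dissociation_set E (V - (closed_nbhd V E v \<union> closed_nbhd V E u)) (F - {v, u})"
      using maximal_dissociation_set_remove_components[OF g m, of "{v, u}"] 3 by auto
    moreover have "F = insert v (insert u (F - {v, u}))" using 3 by blast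
    moreover have "u \<in> open_nbhd V E v" using 3 edge_V unfolding open_nbhd_def by blast
    ultimately show thesis using that(3) unfolding maximal_dissociation_sets_def by blast
  qed
qed

lemma maximal_dissociation_set_not_isolated_if_dominated:
  assumes g: "simple_graph V E" and m: "maximal_dissociation_set E V F" and "v \<in> F"
    and w: "w \<in> open_nbhd V E v" and dominated: "closed_nbhd V E w \<subseteq> closed_nbhd V E v"
  shows "\<exists>u\<in>F. E v u"
proof (rule ccontr)
  assume isolated: "\<not> (\<exists>u\<in>F. E v u)"
  have sym: "\<And>x y. E x y \<Longrightarrow> E y x" and irr: "\<And>x. \<not> E x x"
    and edge_V: "\<And>x y. E x y \<Longrightarrow> x \<in> V"
    using g unfolding simple_graph_def by auto
  have d: "dissociation_set E V F" and maximal: "\<And>F'. F \<subset> F' \<Longrightarrow> \<not> dissociation_set E V F'"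
    using m unfolding maximal_dissociation_set_def by auto
  have "w \<in> V" "E v w" using w unfolding open_nbhd_def by auto
  have w_nbrs: "\<And>x. E w x \<Longrightarrow> x = v \<or> E v x"
    using dominated edge_V sym unfolding closed_nbhd_def open_nbhd_def by blast
  have "dissociation_set E V (insert w F)"
    unfolding dissociation_set_def
  proof (intro conjI ballI)
    show "insert w F \<subseteq> V" using d \<open>w \<in> V\<close> unfolding dissociation_set_def by blast
  next
    fix a assume a: "a \<in> insert w F"
    consider "a = w" | "a = v" | "a \<in> F" "a \<noteq> v" "a \<noteq> w" using a by blast
    then show "card {y \<in> insert w F. E a y} \<le> 1"
    proof cases
      case 1
      then have "{y \<in> insert w F. E a y} \<subseteq> {v}" using w_nbrs isolated irr by blast
      then show ?thesis using card_mono[of "{v}"] by fastforce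
    next
      case 2
      then have "{y \<in> insert w F. E a y} \<subseteq> {w}" using isolated by blast
      then show ?thesis using card_mono[of "{w}"] by fastforce
    next
      case 3
      then have "{y \<in> insert w F. E a y} = {y \<in> F. E a y}"
        using w_nbrs sym isolated by blast
      then show ?thesis using d 3 unfolding dissociation_set_def by auto
    qed
  qed
  moreover have "F \<subset> insert w F" using isolated \<open>E v w\<close> by blast
  ultimately show False using maximal by blast
qed

lemma maximal_dissociation_sets_cover:
  fixes v :: 'a
  assumes g: "simple_graph V E"
  defines "U \<equiv> \<Union>u\<in>open_nbhd V E v. (\<lambda>H. insert v (insert u H)) `
                 maximal_dissociation_sets E (V - (closed_nbhd V E v \<union> closed_nbhd V E u))"
  shows "maximal_dissociation_sets E V \<subseteq> maximal_dissociation_sets E (V - {v})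
           \<union> insert v ` maximal_dissociation_sets E (V - closed_nbhd V E v) \<union> U"
    and "\<exists>w\<in>open_nbhd V E v. closed_nbhd V E w \<subseteq> closed_nbhd V E v \<Longrightarrow>
           maximal_dissociation_sets E V \<subseteq> maximal_dissociation_sets E (V - {v}) \<union> U"
proof -
  have branch: "F \<in> maximal_dissociation_sets E (V - {v}) \<or> F \<in> U \<or>
      (v \<in> F \<and> (\<forall>u\<in>F. \<not> E v u) \<and> F \<in> insert v ` maximal_dissociation_sets E (V - closed_nbhd V E v))"
    if "maximal_dissociation_set E V F" for F
    using that by (rule maximal_dissociation_set_cases[OF g]) (auto simp: U_def)
  show "maximal_dissociation_sets E V \<subseteq> maximal_dissociation_sets E (V - {v})
           \<union> insert v ` maximal_dissociation_sets E (V - closed_nbhd V E v) \<union> U"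
  proof
    fix F assume "F \<in> maximal_dissociation_sets E V"
    then show "F \<in> maximal_dissociation_sets E (V - {v})
           \<union> insert v ` maximal_dissociation_sets E (V - closed_nbhd V E v) \<union> U"
      using branch by (auto simp: maximal_dissociation_sets_def)
  qed
  show "maximal_dissociation_sets E V \<subseteq> maximal_dissociation_sets E (V - {v}) \<union> U"
    if dominated: "\<exists>w\<in>open_nbhd V E v. closed_nbhd V E w \<subseteq> closed_nbhd V E v"
  proof
    fix F assume "F \<in> maximal_dissociation_sets E V"
    then have m: "maximal_dissociation_set E V F" by (simp add: maximal_dissociation_sets_def)
    obtain w where "w \<in> open_nbhd V E v" "closed_nbhd V E w \<subseteq> closed_nbhd V E v"
      using dominated by blast
    then have "v \<in> F \<Longrightarrow> \<exists>u\<in>F. E v u"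
      using maximal_dissociation_set_not_isolated_if_dominated[OF g m] by blast
    then show "F \<in> maximal_dissociation_sets E (V - {v}) \<union> U" using branch[OF m] by blast
  qed
qed

lemma card_UN_image_le:
  assumes "finite I" "\<And>i. i \<in> I \<Longrightarrow> finite (A i)"
  shows "card (\<Union>i\<in>I. f i ` A i) \<le> (\<Sum>i\<in>I. card (A i))"
proof -
  have "card (\<Union>i\<in>I. f i ` A i) \<le> (\<Sum>i\<in>I. card (f i ` A i))"
    by (rule card_UN_le[OF assms(1)])
  also have "\<dots> \<le> (\<Sum>i\<in>I. card (A i))"
    by (rule sum_mono) (rule card_image_le[OF assms(2)])
  finally show ?thesis .
qed

theorem lemma2p2:
  fixes V :: "'a set" and E :: "'a \<Rightarrow> 'a \<Rightarrow> bool" and v :: 'a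
  assumes "simple_graph V E" and "v \<in> V"
  shows "phi E V \<le> phi E (V - {v}) + phi E (V - closed_nbhd V E v)
            + (\<Sum>u\<in>open_nbhd V E v. phi E (V - (closed_nbhd V E v \<union> closed_nbhd V E u)))
         \<and> ((\<exists>w\<in>open_nbhd V E v. closed_nbhd V E w \<subseteq> closed_nbhd V E v) \<longrightarrow>
          phi E V \<le> phi E (V - {v})
            + (\<Sum>u\<in>open_nbhd V E v. phi E (V - (closed_nbhd V E v \<union> closed_nbhd V E u))))"
proof -
  have fin: "finite V" using assms(1) unfolding simple_graph_def by blast
  let ?M = "maximal_dissociation_sets E"
  define A where "A = ?M (V - {v})"
  define B where "B = insert v ` ?M (V - closed_nbhd V E v)"
  define U where "U = (\<Union>u\<in>open_nbhd V E v. (\<lambda>H. insert v (insert u H)) `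
                         ?M (V - (closed_nbhd V E v \<union> closed_nbhd V E u)))"
  have finite_branches: "finite A" "finite B" "finite U"
    using fin unfolding A_def B_def U_def open_nbhd_def
    by (auto intro!: finite_maximal_dissociation_sets)
  have "card A = phi E (V - {v})" "card B \<le> phi E (V - closed_nbhd V E v)"
    "card U \<le> (\<Sum>u\<in>open_nbhd V E v. phi E (V - (closed_nbhd V E v \<union> closed_nbhd V E u)))"
    using fin unfolding A_def B_def U_def phi_eq_card_maximal_dissociation_sets open_nbhd_def
    by (auto intro!: card_image_le card_UN_image_le finite_maximal_dissociation_sets)
  moreover have "phi E V \<le> card A + card B + card U"
    using maximal_dissociation_sets_cover(1)[OF assms(1), of v] finite_branches
    unfolding phi_eq_card_maximal_dissociation_sets A_def [symmetric] B_def [symmetric] U_def [symmetric]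
    by (meson card_mono card_Un_le finite_UnI add_le_mono le_refl order_trans)
  moreover have "phi E V \<le> card A + card U"
    if "\<exists>w\<in>open_nbhd V E v. closed_nbhd V E w \<subseteq> closed_nbhd V E v"
    using maximal_dissociation_sets_cover(2)[OF assms(1) that] finite_branches
    unfolding phi_eq_card_maximal_dissociation_sets A_def [symmetric] U_def [symmetric]
    by (meson card_mono card_Un_le finite_UnI order_trans)
  ultimately show ?thesis by linarith
qed

end
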